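(* Let $\{A_m\}_{m\ge0}$ and $\{B_m\}_{m\ge0}$ be integer-valued random processes with $A_0=B_0$. Suppose there exist $p^A_{ik}\in[0,1]$ such that for all $m\ge0$ and $k,i,i_0,\dots,i_{m-1}\in\mathbb{Z}$ (whenever the conditional probabilities are defined) $$p^A_{ik}=\mathbb{P}(A_{m+1}=k\mid A_{m+1}\ne i,A_m=i)=\mathbb{P}(A_{m+1}=k\mid A_{m+1}\ne i,A_m=i,A_{m-1}=i_{m-1},\dots,A_0=i_0),$$ and similarly for $B_m$ with numbers $p^B_{ik}$, and assume $p^A_{ik}=p^B_{ik}$ for all $i,k\in\mathbb{Z}$. Suppose further that for all $m\ge0$ and $i,i_0,\dots,i_{m-1},j_0,\dots,j_{m-1}\in\mathbb{Z}$ (whenever defined) $$\mathbb{P}(A_{m+1}\ne i\mid A_m=i,A_{m-1}=i_{m-1},\dots,A_0=i_0)\ge \mathbb{P}(B_{m+1}\ne i\mid B_m=i,B_{m-1}=j_{m-1},\dots,B_0=j_0).$$ Then for every $t\in\mathbb{N}$ and $\delta>0$, $$\mathbb{P}\Big(\max_{0\le m\le t}|A_m|\ge\delta\Big)\ge\mathbb{P}\Big(\max_{0\le m\le t}|B_m|\ge\delta\Big).$$ *)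

theory Defs
  imports "HOL-Probability.Probability"
begin

text \<open>Elementary conditional probability P(E | F) = P(E \<inter> F) / P(F); only used when P(F) > 0.\<close>
definition cprob :: "'a measure \<Rightarrow> 'a set \<Rightarrow> 'a set \<Rightarrow> real" where
  "cprob M E F = measure M (E \<inter> F) / measure M F"

definition hist_event :: "'a measure \<Rightarrow> (nat \<Rightarrow> 'a \<Rightarrow> int) \<Rightarrow> nat \<Rightarrow> (nat \<Rightarrow> int) \<Rightarrow> 'a set" where
  "hist_event M X m h = {x \<in> space M. \<forall>j\<le>m. X j x = h j}"

definition jump_kernel :: "'a measure \<Rightarrow> (nat \<Rightarrow> 'a \<Rightarrow> int) \<Rightarrow> (int \<Rightarrow> int \<Rightarrow> real) \<Rightarrow> bool" where
  "jump_kernel M X p \<longleftrightarrow>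
     (\<forall>m i k. let F = {x \<in> space M. X (Suc m) x \<noteq> i \<and> X m x = i} in
        measure M F > 0 \<longrightarrow> p i k = cprob M {x \<in> space M. X (Suc m) x = k} F) \<and>
     (\<forall>m i k h. h m = i \<longrightarrow>
        (let F = {x \<in> space M. X (Suc m) x \<noteq> i} \<inter> hist_event M X m h in
        measure M F > 0 \<longrightarrow> p i k = cprob M {x \<in> space M. X (Suc m) x = k} F))"

end

theory Submission imports Defs begin

text \<open>Both processes are compared with an auxiliary Markov chain that, sitting at state \<open>i\<close>
  at time \<open>m\<close>, leaves \<open>i\<close> with probability \<open>c m i\<close>, the supremum of the conditional
  probabilities with which \<open>B\<close> leaves \<open>i\<close> at time \<open>m\<close>, and then moves according to the common
  kernel \<open>p\<close>. Its probability \<open>u\<^sub>n(i)\<close> of reaching \<open>|\<cdot>| \<ge> \<delta>\<close> within the remaining \<open>n\<close> steps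
  is at most the \<open>p(i,\<cdot>)\<close>-average of \<open>u\<^sub>n\<close> at states below \<open>\<delta>\<close>: leaving \<open>i\<close> now is never
  worse than staying.
  Hence the conditional probability of reaching \<open>\<delta>\<close> given any history is a nondecreasing function
  of the jump probability at the current step, and a backward induction over histories shows that
  it is at least \<open>u\<close> for \<open>A\<close>, which jumps at least as often, and at most \<open>u\<close> for \<open>B\<close>. Averaging
  over the common initial distribution gives the claim.\<close>

lemma convex_comb_between:
  fixes a w c :: real
  assumes "0 \<le> c" "c \<le> 1" "a \<le> w"
  shows "a \<le> (1 - c) * a + c * w" and "(1 - c) * a + c * w \<le> w"
proof -
  have "c * a \<le> c * w" "(1 - c) * a \<le> (1 - c) * w"
    using assms by (simp_all add: mult_left_mono)
  then show "a \<le> (1 - c) * a + c * w" "(1 - c) * a + c * w \<le> w"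
    by (simp_all add: algebra_simps)
qed

lemma convex_comb_mult_le:
  fixes a w c P J :: real
  assumes "a \<le> w" "c * P \<le> J"
  shows "((1 - c) * a + c * w) * P \<le> a * (P - J) + J * w"
proof -
  have "0 \<le> (J - c * P) * (w - a)" using assms by simp
  then show ?thesis by (simp add: algebra_simps)
qed

lemma convex_comb_mult_ge:
  fixes a w c P J :: real
  assumes "a \<le> w" "J \<le> c * P"
  shows "a * (P - J) + J * w \<le> ((1 - c) * a + c * w) * P"
proof -
  have "0 \<le> (c * P - J) * (w - a)" using assms by simp
  then show ?thesis by (simp add: algebra_simps)
qed

section \<open>The comparison chain\<close>

text \<open>The truncation at 1 matters only where \<open>p i\<close> is unconstrained by the jump kernel
  condition and need not have total mass at most 1.\<close>
definition jump_avg :: "(int \<Rightarrow> int \<Rightarrow> real) \<Rightarrow> (int \<Rightarrow> real) \<Rightarrow> int \<Rightarrow> real" where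
  "jump_avg p f i = enn2real (min 1 (\<integral>\<^sup>+k. ennreal (p i k * f k) \<partial>count_space (UNIV - {i})))"

text \<open>\<open>hit_value p c \<delta> t n i\<close> is the probability that the comparison chain, started in \<open>i\<close> at
  time \<open>t - n\<close>, reaches \<open>|\<cdot>| \<ge> \<delta>\<close> by time \<open>t\<close>.\<close>
fun hit_value :: "(int \<Rightarrow> int \<Rightarrow> real) \<Rightarrow> (nat \<Rightarrow> int \<Rightarrow> real) \<Rightarrow> real \<Rightarrow> nat \<Rightarrow> nat \<Rightarrow> int \<Rightarrow> real"
where
  "hit_value p c \<delta> t 0 i = (if \<delta> \<le> real_of_int \<bar>i\<bar> then 1 else 0)"
| "hit_value p c \<delta> t (Suc n) i = (if \<delta> \<le> real_of_int \<bar>i\<bar> then 1 else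
      (1 - c (t - Suc n) i) * hit_value p c \<delta> t n i
        + c (t - Suc n) i * jump_avg p (hit_value p c \<delta> t n) i)"

lemma jump_avg_nonneg: "0 \<le> jump_avg p f i"
  unfolding jump_avg_def by simp

lemma ennreal_jump_avg:
  "ennreal (jump_avg p f i) = min 1 (\<integral>\<^sup>+k. ennreal (p i k * f k) \<partial>count_space (UNIV - {i}))"
proof -
  have "min 1 (\<integral>\<^sup>+k. ennreal (p i k * f k) \<partial>count_space (UNIV - {i})) \<noteq> \<top>"
    by (metis ennreal_one_less_top leD min.cobounded1)
  then show ?thesis unfolding jump_avg_def by (simp add: top.not_eq_extremum)
qed

lemma jump_avg_le_1: "jump_avg p f i \<le> 1"
  using ennreal_jump_avg[of p f i] by (simp add: ennreal_le_1[symmetric])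

lemma jump_avg_mono:
  assumes "\<And>k. 0 \<le> p i k" "\<And>k. f k \<le> g k"
  shows "jump_avg p f i \<le> jump_avg p g i"
proof -
  have "(\<integral>\<^sup>+k. ennreal (p i k * f k) \<partial>count_space (UNIV - {i}))
      \<le> (\<integral>\<^sup>+k. ennreal (p i k * g k) \<partial>count_space (UNIV - {i}))"
    by (intro nn_integral_mono ennreal_leI mult_left_mono assms)
  then have "ennreal (jump_avg p f i) \<le> ennreal (jump_avg p g i)"
    unfolding ennreal_jump_avg by (rule min.mono[OF order_refl])
  then show ?thesis by (simp add: jump_avg_nonneg)
qed

lemma hit_value_bounds:
  assumes "\<And>m i. 0 \<le> c m i \<and> c m i \<le> 1"
  shows "0 \<le> hit_value p c \<delta> t n i \<and> hit_value p c \<delta> t n i \<le> 1"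
proof (induction n arbitrary: i)
  case (Suc n)
  define a where "a = hit_value p c \<delta> t n i"
  define w where "w = jump_avg p (hit_value p c \<delta> t n) i"
  define r where "r = c (t - Suc n) i"
  have "0 \<le> a" "a \<le> 1" "0 \<le> r" "r \<le> 1" "0 \<le> w" "w \<le> 1"
    using Suc assms[of "t - Suc n" i] jump_avg_nonneg jump_avg_le_1
    unfolding a_def r_def w_def by auto
  moreover have "(1 - r) * a \<le> (1 - r) * 1" "r * w \<le> r * 1"
    using \<open>a \<le> 1\<close> \<open>r \<le> 1\<close> \<open>0 \<le> r\<close> \<open>w \<le> 1\<close> by (intro mult_left_mono; simp)+
  ultimately have "0 \<le> (1 - r) * a + r * w" "(1 - r) * a + r * w \<le> 1"
    by simp_all
  then show ?case by (simp add: a_def[symmetric] w_def[symmetric] r_def[symmetric])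
qed simp

lemma hit_value_le_Suc:
  assumes "\<And>m i. 0 \<le> c m i \<and> c m i \<le> 1"
    and "\<not> \<delta> \<le> real_of_int \<bar>i\<bar> \<Longrightarrow> hit_value p c \<delta> t n i \<le> jump_avg p (hit_value p c \<delta> t n) i"
  shows "hit_value p c \<delta> t n i \<le> hit_value p c \<delta> t (Suc n) i"
  using assms convex_comb_between(1) hit_value_bounds[OF assms(1)] by auto

text \<open>Since the values increase with the remaining time, jumping away now is at least as good
  as waiting one step at \<open>i\<close> and having one step less afterwards.\<close>
lemma hit_value_le_jump_avg:
  assumes c_bounds: "\<And>m i. 0 \<le> c m i \<and> c m i \<le> 1" and p_nonneg: "\<And>i k. 0 \<le> p i k"
  shows "\<not> \<delta> \<le> real_of_int \<bar>i\<bar> \<Longrightarrow> hit_value p c \<delta> t n i \<le> jump_avg p (hit_value p c \<delta> t n) i"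
proof (induction n arbitrary: i)
  case 0
  then show ?case by (simp add: jump_avg_nonneg)
next
  case (Suc n)
  define a where "a = hit_value p c \<delta> t n i"
  define w where "w = jump_avg p (hit_value p c \<delta> t n) i"
  define r where "r = c (t - Suc n) i"
  have "hit_value p c \<delta> t (Suc n) i = (1 - r) * a + r * w"
    using Suc.prems by (simp add: a_def w_def r_def)
  also have "\<dots> \<le> w"
    using Suc c_bounds[of "t - Suc n" i] by (intro convex_comb_between(2)) (auto simp: a_def w_def r_def)
  also have "w \<le> jump_avg p (hit_value p c \<delta> t (Suc n)) i"
    unfolding w_def using Suc.IH by (intro jump_avg_mono p_nonneg hit_value_le_Suc[OF c_bounds])
  finally show ?case .
qed

section \<open>Conditional probabilities and maximal jump rates\<close>

lemma cprob_le_1: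
  assumes "finite_measure M"
  shows "cprob M E F \<le> 1"
proof (cases "F \<in> sets M")
  case True
  then have "measure M (E \<inter> F) \<le> measure M F"
    by (intro finite_measure.finite_measure_mono[OF assms]) auto
  moreover have "measure M F = 0 \<or> 0 < measure M F"
    using measure_nonneg[of M F] by linarith
  ultimately show ?thesis by (auto simp: cprob_def)
qed (simp add: cprob_def measure_notin_sets)

definition max_jump_rate :: "'a measure \<Rightarrow> (nat \<Rightarrow> 'a \<Rightarrow> int) \<Rightarrow> nat \<Rightarrow> int \<Rightarrow> real" where
  "max_jump_rate M X m i = Sup ({cprob M {x \<in> space M. X (Suc m) x \<noteq> i} (hist_event M X m h) | h.
      h m = i \<and> measure M (hist_event M X m h) > 0} \<union> {0})"

lemma bdd_above_jump_rates:
  assumes "finite_measure M"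
  shows "bdd_above ({cprob M {x \<in> space M. X (Suc m) x \<noteq> i} (hist_event M X m h) | h.
      h m = i \<and> measure M (hist_event M X m h) > 0} \<union> {0})"
  using cprob_le_1[OF assms] by (intro bdd_aboveI[where M = 1]) auto

lemma max_jump_rate_bounds:
  assumes "finite_measure M"
  shows "0 \<le> max_jump_rate M X m i \<and> max_jump_rate M X m i \<le> 1"
proof
  show "0 \<le> max_jump_rate M X m i"
    unfolding max_jump_rate_def by (rule cSup_upper[OF _ bdd_above_jump_rates[OF assms]]) simp
  show "max_jump_rate M X m i \<le> 1"
    unfolding max_jump_rate_def using cprob_le_1[OF assms] by (intro cSup_least) auto
qed

lemma cprob_le_max_jump_rate:
  assumes "finite_measure M" "h m = i" "measure M (hist_event M X m h) > 0"
  shows "cprob M {x \<in> space M. X (Suc m) x \<noteq> i} (hist_event M X m h) \<le> max_jump_rate M X m i"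
  unfolding max_jump_rate_def using assms
  by (intro cSup_upper[OF _ bdd_above_jump_rates[OF assms(1)]]) auto

lemma max_jump_rate_le:
  assumes "0 \<le> r"
    and "\<And>h. h m = i \<Longrightarrow> measure M (hist_event M X m h) > 0 \<Longrightarrow>
           cprob M {x \<in> space M. X (Suc m) x \<noteq> i} (hist_event M X m h) \<le> r"
  shows "max_jump_rate M X m i \<le> r"
  unfolding max_jump_rate_def using assms by (intro cSup_least) auto

section \<open>Processes with a jump kernel\<close>

locale jump_process = prob_space M for M :: "'a measure" +
  fixes X :: "nat \<Rightarrow> 'a \<Rightarrow> int" and p :: "int \<Rightarrow> int \<Rightarrow> real"
  assumes measurable_X[measurable]: "\<And>m. X m \<in> measurable M (count_space UNIV)"
    and jump_kernel: "jump_kernel M X p"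
    and p_nonneg: "\<And>i k. 0 \<le> p i k"
begin

abbreviation H :: "nat \<Rightarrow> (nat \<Rightarrow> int) \<Rightarrow> 'a set" where
  "H m h \<equiv> hist_event M X m h"

definition jump_event :: "nat \<Rightarrow> (nat \<Rightarrow> int) \<Rightarrow> 'a set" where
  "jump_event m h = {x \<in> space M. X (Suc m) x \<noteq> h m} \<inter> H m h"

lemma sets_hist_event[measurable]: "H m h \<in> sets M"
  unfolding hist_event_def by measurable

lemma sets_jump_event[measurable]: "jump_event m h \<in> sets M"
  unfolding jump_event_def by measurable

lemma hist_event_Suc: "H (Suc m) (h(Suc m := k)) = {x \<in> space M. X (Suc m) x = k} \<inter> H m h"
  unfolding hist_event_def by (auto simp: le_Suc_eq)

lemma measure_hist_event_jump:
  assumes "k \<noteq> h m"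
  shows "measure M (H (Suc m) (h(Suc m := k))) = p (h m) k * measure M (jump_event m h)"
proof (cases "measure M (jump_event m h) > 0")
  case True
  then have "p (h m) k = cprob M {x \<in> space M. X (Suc m) x = k} (jump_event m h)"
    using jump_kernel unfolding jump_kernel_def jump_event_def Let_def by blast
  moreover have "{x \<in> space M. X (Suc m) x = k} \<inter> jump_event m h = H (Suc m) (h(Suc m := k))"
    using assms unfolding hist_event_Suc jump_event_def by auto
  ultimately show ?thesis using True by (simp add: cprob_def)
next
  case False
  have "H (Suc m) (h(Suc m := k)) \<subseteq> jump_event m h"
    using assms unfolding hist_event_Suc jump_event_def by auto
  then have "measure M (H (Suc m) (h(Suc m := k))) \<le> measure M (jump_event m h)"
    by (intro finite_measure_mono) auto
  moreover have "measure M (jump_event m h) = 0"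
    using False by (simp add: not_less measure_le_0_iff)
  ultimately show ?thesis by (simp add: measure_le_0_iff)
qed

lemma measure_split_stay_jump:
  assumes [measurable]: "S \<in> sets M"
  shows "measure M (S \<inter> H m h)
    = measure M (S \<inter> H (Suc m) (h(Suc m := h m))) + measure M (S \<inter> jump_event m h)"
proof -
  have "S \<inter> H m h = (S \<inter> H (Suc m) (h(Suc m := h m))) \<union> (S \<inter> jump_event m h)"
    unfolding hist_event_Suc jump_event_def using sets.sets_into_space[OF assms] by blast
  moreover have "(S \<inter> H (Suc m) (h(Suc m := h m))) \<inter> (S \<inter> jump_event m h) = {}"
    unfolding hist_event_Suc jump_event_def by auto
  ultimately show ?thesis by (simp add: finite_measure_Union)
qed

lemma measure_hist_event_stay:
  "measure M (H (Suc m) (h(Suc m := h m))) = measure M (H m h) - measure M (jump_event m h)"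
  using measure_split_stay_jump[of "space M" m h] sets.sets_into_space[OF sets_hist_event]
  by (simp add: Int_absorb1)

lemma emeasure_jump_event_decomp:
  assumes [measurable]: "S \<in> sets M"
  shows "emeasure M (S \<inter> jump_event m h)
    = (\<integral>\<^sup>+k. emeasure M (S \<inter> H (Suc m) (h(Suc m := k))) \<partial>count_space (UNIV - {h m}))"
proof -
  have decomp: "S \<inter> jump_event m h = (\<Union>k\<in>UNIV - {h m}. S \<inter> H (Suc m) (h(Suc m := k)))"
    unfolding hist_event_Suc jump_event_def by auto
  have "disjoint_family_on (\<lambda>k. S \<inter> H (Suc m) (h(Suc m := k))) (UNIV - {h m})"
    unfolding disjoint_family_on_def hist_event_Suc by auto
  then show ?thesis unfolding decomp by (intro emeasure_UN_countable) auto
qed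

lemma ennreal_measure_jump_event_mult:
  assumes "k \<noteq> h m" "0 \<le> f k"
  shows "ennreal (measure M (jump_event m h)) * ennreal (p (h m) k * f k)
    = ennreal (f k * measure M (H (Suc m) (h(Suc m := k))))"
  using assms p_nonneg[of "h m" k]
  by (simp add: measure_hist_event_jump ennreal_mult[symmetric] mult_ac)

lemma measure_jump_event_mult_jump_avg_le:
  assumes [measurable]: "S \<in> sets M" and f_nonneg: "\<And>k. 0 \<le> f k"
    and "\<And>k. k \<noteq> h m \<Longrightarrow>
      f k * measure M (H (Suc m) (h(Suc m := k))) \<le> measure M (S \<inter> H (Suc m) (h(Suc m := k)))"
  shows "measure M (jump_event m h) * jump_avg p f (h m) \<le> measure M (S \<inter> jump_event m h)"
proof -
  let ?J = "ennreal (measure M (jump_event m h))"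
  have "ennreal (measure M (jump_event m h) * jump_avg p f (h m))
      \<le> ?J * (\<integral>\<^sup>+k. ennreal (p (h m) k * f k) \<partial>count_space (UNIV - {h m}))"
    by (simp add: ennreal_mult ennreal_jump_avg jump_avg_nonneg mult_left_mono)
  also have "\<dots> = (\<integral>\<^sup>+k. ?J * ennreal (p (h m) k * f k) \<partial>count_space (UNIV - {h m}))"
    by (simp add: nn_integral_cmult)
  also have "\<dots> \<le> (\<integral>\<^sup>+k. emeasure M (S \<inter> H (Suc m) (h(Suc m := k))) \<partial>count_space (UNIV - {h m}))"
    using assms(3) f_nonneg
    by (intro nn_integral_mono) (simp add: ennreal_measure_jump_event_mult emeasure_eq_measure)
  also have "\<dots> = emeasure M (S \<inter> jump_event m h)"
    by (rule emeasure_jump_event_decomp[symmetric]) simp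
  also have "\<dots> = ennreal (measure M (S \<inter> jump_event m h))"
    by (simp add: emeasure_eq_measure)
  finally show ?thesis by simp
qed

lemma measure_le_jump_event_mult_jump_avg:
  assumes [measurable]: "S \<in> sets M" and f_nonneg: "\<And>k. 0 \<le> f k"
    and "\<And>k. k \<noteq> h m \<Longrightarrow>
      measure M (S \<inter> H (Suc m) (h(Suc m := k))) \<le> f k * measure M (H (Suc m) (h(Suc m := k)))"
  shows "measure M (S \<inter> jump_event m h) \<le> measure M (jump_event m h) * jump_avg p f (h m)"
proof -
  let ?J = "ennreal (measure M (jump_event m h))"
  let ?I = "\<integral>\<^sup>+k. ennreal (p (h m) k * f k) \<partial>count_space (UNIV - {h m})"
  have "ennreal (measure M (S \<inter> jump_event m h))
      = (\<integral>\<^sup>+k. emeasure M (S \<inter> H (Suc m) (h(Suc m := k))) \<partial>count_space (UNIV - {h m}))"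
    by (simp add: emeasure_jump_event_decomp flip: emeasure_eq_measure)
  also have "\<dots> \<le> (\<integral>\<^sup>+k. ?J * ennreal (p (h m) k * f k) \<partial>count_space (UNIV - {h m}))"
    using assms(3) f_nonneg
    by (intro nn_integral_mono) (simp add: ennreal_measure_jump_event_mult emeasure_eq_measure)
  also have "\<dots> = ?J * ?I" by (simp add: nn_integral_cmult)
  finally have "ennreal (measure M (S \<inter> jump_event m h)) \<le> ?J * ?I" .
  moreover have "ennreal (measure M (S \<inter> jump_event m h)) \<le> ?J * 1"
    by (simp add: ennreal_leI finite_measure_mono)
  ultimately have "ennreal (measure M (S \<inter> jump_event m h)) \<le> ?J * min 1 ?I"
    by (cases "?I \<le> 1") (simp_all add: min_absorb1 min_absorb2)
  also have "\<dots> = ennreal (measure M (jump_event m h) * jump_avg p f (h m))"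
    by (simp add: ennreal_mult ennreal_jump_avg jump_avg_nonneg)
  finally show ?thesis
    by (subst (asm) ennreal_le_iff) (simp_all add: jump_avg_nonneg)
qed

lemma measure_jump_event_le:
  assumes "measure M (H m h) > 0 \<Longrightarrow> cprob M {x \<in> space M. X (Suc m) x \<noteq> h m} (H m h) \<le> r"
  shows "measure M (jump_event m h) \<le> r * measure M (H m h)"
proof (cases "measure M (H m h) > 0")
  case True
  then show ?thesis using assms by (simp add: cprob_def jump_event_def pos_divide_le_eq)
next
  case False
  then have "measure M (H m h) = 0" using measure_nonneg[of M "H m h"] by linarith
  moreover have "measure M (jump_event m h) \<le> measure M (H m h)"
    unfolding jump_event_def by (intro finite_measure_mono) auto
  ultimately show ?thesis by simp
qed

lemma measure_jump_event_ge:
  assumes "measure M (H m h) > 0 \<Longrightarrow> r \<le> cprob M {x \<in> space M. X (Suc m) x \<noteq> h m} (H m h)"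
  shows "r * measure M (H m h) \<le> measure M (jump_event m h)"
proof (cases "measure M (H m h) > 0")
  case True
  then show ?thesis using assms by (simp add: cprob_def jump_event_def pos_le_divide_eq)
next
  case False
  then have "measure M (H m h) = 0" using measure_nonneg[of M "H m h"] by linarith
  then show ?thesis by simp
qed

end

section \<open>Reaching level \<open>\<delta>\<close> by time \<open>t\<close>\<close>

locale jump_process_hit = jump_process +
  fixes \<delta> :: real and t :: nat
begin

definition Hit :: "nat \<Rightarrow> 'a set" where
  "Hit m = {x \<in> space M. \<exists>j\<in>{m..t}. \<delta> \<le> real_of_int \<bar>X j x\<bar>}"

lemma sets_Hit[measurable]: "Hit m \<in> sets M"
proof -
  have "Hit m = (\<Union>j\<in>{m..t}. {x \<in> space M. \<delta> \<le> real_of_int \<bar>X j x\<bar>})"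
    unfolding Hit_def by blast
  then show ?thesis by simp
qed

lemma Hit_0_eq_Max: "Hit 0 = {x \<in> space M. Max ((\<lambda>m. real_of_int \<bar>X m x\<bar>) ` {0..t}) \<ge> \<delta>}"
  unfolding Hit_def by (auto simp: Max_ge_iff)

lemma Hit_inter_hist_event_exceeding:
  assumes "\<delta> \<le> real_of_int \<bar>h m\<bar>" "m \<le> t"
  shows "Hit m \<inter> H m h = H m h"
  using assms unfolding Hit_def hist_event_def by force

lemma Hit_inter_hist_event_last:
  assumes "\<not> \<delta> \<le> real_of_int \<bar>h t\<bar>"
  shows "Hit t \<inter> H t h = {}"
  using assms unfolding Hit_def hist_event_def by force

lemma Hit_inter_hist_event_Suc:
  assumes "\<not> \<delta> \<le> real_of_int \<bar>h m\<bar>"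
  shows "Hit m \<inter> H m h = Hit (Suc m) \<inter> H m h"
proof (intro equalityI subsetI)
  fix x assume x: "x \<in> Hit m \<inter> H m h"
  then obtain j where j: "j \<in> {m..t}" "\<delta> \<le> real_of_int \<bar>X j x\<bar>" and "X m x = h m"
    by (auto simp: Hit_def hist_event_def)
  with assms have "j \<noteq> m" by auto
  with j x show "x \<in> Hit (Suc m) \<inter> H m h" by (auto simp: Hit_def)
qed (auto simp: Hit_def)

lemma measure_Hit_split:
  assumes "\<not> \<delta> \<le> real_of_int \<bar>h m\<bar>"
  shows "measure M (Hit m \<inter> H m h) = measure M (Hit (Suc m) \<inter> H (Suc m) (h(Suc m := h m)))
    + measure M (Hit (Suc m) \<inter> jump_event m h)"
  using Hit_inter_hist_event_Suc[of h m, OF assms] measure_split_stay_jump[of "Hit (Suc m)" m h] by simp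

lemma hit_value_le_measure_Hit:
  assumes c_bounds: "\<And>m i. 0 \<le> c m i \<and> c m i \<le> 1"
    and rate: "\<And>m h. c m (h m) * measure M (H m h) \<le> measure M (jump_event m h)"
  shows "m + n = t \<Longrightarrow> hit_value p c \<delta> t n (h m) * measure M (H m h) \<le> measure M (Hit m \<inter> H m h)"
proof (induction n arbitrary: m h)
  case 0
  then show ?case using Hit_inter_hist_event_exceeding[of h m] by simp
next
  case (Suc n)
  show ?case
  proof (cases "\<delta> \<le> real_of_int \<bar>h m\<bar>")
    case True
    then show ?thesis using Hit_inter_hist_event_exceeding[of h m] Suc.prems by simp
  next
    case False
    define a where "a = hit_value p c \<delta> t n (h m)"
    define w where "w = jump_avg p (hit_value p c \<delta> t n) (h m)"
    define P where "P = measure M (H m h)"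
    define J where "J = measure M (jump_event m h)"
    have Suc_m: "Suc m + n = t" and step_time: "t - Suc n = m" using Suc.prems by simp_all
    have IH: "hit_value p c \<delta> t n k * measure M (H (Suc m) (h(Suc m := k)))
        \<le> measure M (Hit (Suc m) \<inter> H (Suc m) (h(Suc m := k)))" for k
      using Suc.IH[OF Suc_m, of "h(Suc m := k)"] by (simp only: fun_upd_same)
    have "hit_value p c \<delta> t (Suc n) (h m) * P = ((1 - c m (h m)) * a + c m (h m) * w) * P"
      using False by (simp add: a_def w_def step_time)
    also have "\<dots> \<le> a * (P - J) + J * w"
      using hit_value_le_jump_avg[OF c_bounds p_nonneg] False rate[of m h]
      by (intro convex_comb_mult_le) (simp_all add: a_def w_def P_def J_def)
    also have "\<dots> \<le> measure M (Hit (Suc m) \<inter> H (Suc m) (h(Suc m := h m)))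
        + measure M (Hit (Suc m) \<inter> jump_event m h)"
    proof (rule add_mono)
      show "a * (P - J) \<le> measure M (Hit (Suc m) \<inter> H (Suc m) (h(Suc m := h m)))"
        using IH[of "h m"] by (simp add: a_def P_def J_def measure_hist_event_stay)
      show "J * w \<le> measure M (Hit (Suc m) \<inter> jump_event m h)"
        unfolding J_def w_def
        by (rule measure_jump_event_mult_jump_avg_le) (use IH hit_value_bounds[OF c_bounds] in auto)
    qed
    also have "\<dots> = measure M (Hit m \<inter> H m h)"
      by (rule measure_Hit_split[of h m, OF False, symmetric])
    finally show ?thesis unfolding P_def .
  qed
qed

lemma measure_Hit_le_hit_value:
  assumes c_bounds: "\<And>m i. 0 \<le> c m i \<and> c m i \<le> 1"
    and rate: "\<And>m h. measure M (jump_event m h) \<le> c m (h m) * measure M (H m h)"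
  shows "m + n = t \<Longrightarrow> measure M (Hit m \<inter> H m h) \<le> hit_value p c \<delta> t n (h m) * measure M (H m h)"
proof (induction n arbitrary: m h)
  case 0
  then show ?case
    using Hit_inter_hist_event_exceeding[of h m] Hit_inter_hist_event_last[of h] by auto
next
  case (Suc n)
  show ?case
  proof (cases "\<delta> \<le> real_of_int \<bar>h m\<bar>")
    case True
    then show ?thesis using Hit_inter_hist_event_exceeding[of h m] Suc.prems by simp
  next
    case False
    define a where "a = hit_value p c \<delta> t n (h m)"
    define w where "w = jump_avg p (hit_value p c \<delta> t n) (h m)"
    define P where "P = measure M (H m h)"
    define J where "J = measure M (jump_event m h)"
    have Suc_m: "Suc m + n = t" and step_time: "t - Suc n = m" using Suc.prems by simp_all
    have IH: "measure M (Hit (Suc m) \<inter> H (Suc m) (h(Suc m := k)))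
        \<le> hit_value p c \<delta> t n k * measure M (H (Suc m) (h(Suc m := k)))" for k
      using Suc.IH[OF Suc_m, of "h(Suc m := k)"] by (simp only: fun_upd_same)
    have "measure M (Hit m \<inter> H m h) = measure M (Hit (Suc m) \<inter> H (Suc m) (h(Suc m := h m)))
        + measure M (Hit (Suc m) \<inter> jump_event m h)"
      by (rule measure_Hit_split[of h m, OF False])
    also have "\<dots> \<le> a * (P - J) + J * w"
    proof (rule add_mono)
      show "measure M (Hit (Suc m) \<inter> H (Suc m) (h(Suc m := h m))) \<le> a * (P - J)"
        using IH[of "h m"] by (simp add: a_def P_def J_def measure_hist_event_stay)
      show "measure M (Hit (Suc m) \<inter> jump_event m h) \<le> J * w"
        unfolding J_def w_def
        by (rule measure_le_jump_event_mult_jump_avg) (use IH hit_value_bounds[OF c_bounds] in auto)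
    qed
    also have "\<dots> \<le> ((1 - c m (h m)) * a + c m (h m) * w) * P"
      using hit_value_le_jump_avg[OF c_bounds p_nonneg] False rate[of m h]
      by (intro convex_comb_mult_ge) (simp_all add: a_def w_def P_def J_def)
    also have "\<dots> = hit_value p c \<delta> t (Suc n) (h m) * P"
      using False by (simp add: a_def w_def step_time)
    finally show ?thesis unfolding P_def .
  qed
qed

lemma emeasure_Hit_0:
  "emeasure M (Hit 0) = (\<integral>\<^sup>+i. emeasure M (Hit 0 \<inter> H 0 (\<lambda>_. i)) \<partial>count_space UNIV)"
proof -
  have decomp: "Hit 0 = (\<Union>i. Hit 0 \<inter> H 0 (\<lambda>_. i))"
    unfolding Hit_def hist_event_def by auto
  have "disjoint_family (\<lambda>i. Hit 0 \<inter> H 0 (\<lambda>_. i))"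
    unfolding disjoint_family_on_def hist_event_def by auto
  then show ?thesis by (subst decomp) (intro emeasure_UN_countable; auto)
qed

lemma emeasure_Hit_0_ge:
  assumes "\<And>m i. 0 \<le> c m i \<and> c m i \<le> 1"
    and "\<And>m h. c m (h m) * measure M (H m h) \<le> measure M (jump_event m h)"
  shows "(\<integral>\<^sup>+i. ennreal (hit_value p c \<delta> t t i * measure M (H 0 (\<lambda>_. i))) \<partial>count_space UNIV)
    \<le> emeasure M (Hit 0)"
proof -
  have "ennreal (hit_value p c \<delta> t t i * measure M (H 0 (\<lambda>_. i)))
      \<le> emeasure M (Hit 0 \<inter> H 0 (\<lambda>_. i))" for i
    using hit_value_le_measure_Hit[OF assms, where m = 0 and n = t and h = "\<lambda>_. i"]
    unfolding emeasure_eq_measure by (intro ennreal_leI) simp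
  then show ?thesis unfolding emeasure_Hit_0 by (intro nn_integral_mono)
qed

lemma emeasure_Hit_0_le:
  assumes "\<And>m i. 0 \<le> c m i \<and> c m i \<le> 1"
    and "\<And>m h. measure M (jump_event m h) \<le> c m (h m) * measure M (H m h)"
  shows "emeasure M (Hit 0)
    \<le> (\<integral>\<^sup>+i. ennreal (hit_value p c \<delta> t t i * measure M (H 0 (\<lambda>_. i))) \<partial>count_space UNIV)"
proof -
  have "emeasure M (Hit 0 \<inter> H 0 (\<lambda>_. i))
      \<le> ennreal (hit_value p c \<delta> t t i * measure M (H 0 (\<lambda>_. i)))" for i
    using measure_Hit_le_hit_value[OF assms, where m = 0 and n = t and h = "\<lambda>_. i"]
    unfolding emeasure_eq_measure by (intro ennreal_leI) simp
  then show ?thesis unfolding emeasure_Hit_0 by (intro nn_integral_mono)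
qed

end

theorem proposition1:
  fixes M :: "'a measure" and A B :: "nat \<Rightarrow> 'a \<Rightarrow> int" and p :: "int \<Rightarrow> int \<Rightarrow> real"
  assumes "prob_space M"
    and "\<And>m. A m \<in> measurable M (count_space UNIV)"
    and "\<And>m. B m \<in> measurable M (count_space UNIV)"
    and "\<And>x. x \<in> space M \<Longrightarrow> A 0 x = B 0 x"
    and "\<And>i k. 0 \<le> p i k \<and> p i k \<le> 1"
    and "jump_kernel M A p"
    and "jump_kernel M B p"
    and "\<And>m i h g. h m = i \<Longrightarrow> g m = i \<Longrightarrow>
           measure M (hist_event M A m h) > 0 \<Longrightarrow> measure M (hist_event M B m g) > 0 \<Longrightarrow>
           cprob M {x \<in> space M. A (Suc m) x \<noteq> i} (hist_event M A m h)
             \<ge> cprob M {x \<in> space M. B (Suc m) x \<noteq> i} (hist_event M B m g)"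
    and "(\<delta>::real) > 0"
  shows "measure M {x \<in> space M. Max ((\<lambda>m. real_of_int \<bar>A m x\<bar>) ` {0..t}) \<ge> \<delta>}
           \<ge> measure M {x \<in> space M. Max ((\<lambda>m. real_of_int \<bar>B m x\<bar>) ` {0..t}) \<ge> \<delta>}"
proof -
  interpret A: jump_process_hit M A p \<delta> t
    using assms(1,2,5,6)
    by (intro jump_process_hit.intro jump_process.intro jump_process_axioms.intro) auto
  interpret B: jump_process_hit M B p \<delta> t
    using assms(1,3,5,7)
    by (intro jump_process_hit.intro jump_process.intro jump_process_axioms.intro) auto
  define c where "c = max_jump_rate M B"
  have c_bounds: "0 \<le> c m i \<and> c m i \<le> 1" for m i
    unfolding c_def by (rule max_jump_rate_bounds[OF A.finite_measure])
  have rate_A: "c m (h m) * measure M (A.H m h) \<le> measure M (A.jump_event m h)" for m h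
  proof (rule A.measure_jump_event_ge)
    assume "measure M (A.H m h) > 0"
    then show "c m (h m) \<le> cprob M {x \<in> space M. A (Suc m) x \<noteq> h m} (A.H m h)"
      unfolding c_def using assms(8)[of h m "h m"]
      by (intro max_jump_rate_le) (auto simp: cprob_def)
  qed
  have rate_B: "measure M (B.jump_event m h) \<le> c m (h m) * measure M (B.H m h)" for m h
    unfolding c_def by (intro B.measure_jump_event_le cprob_le_max_jump_rate A.finite_measure) auto
  have same_start: "A.H 0 h = B.H 0 h" for h
    unfolding hist_event_def using assms(4) by auto
  have "emeasure M (B.Hit 0)
      \<le> (\<integral>\<^sup>+i. ennreal (hit_value p c \<delta> t t i * measure M (B.H 0 (\<lambda>_. i))) \<partial>count_space UNIV)"
    by (rule B.emeasure_Hit_0_le[OF c_bounds rate_B])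
  also have "\<dots> \<le> emeasure M (A.Hit 0)"
    unfolding same_start[symmetric] by (rule A.emeasure_Hit_0_ge[OF c_bounds rate_A])
  finally have "measure M (B.Hit 0) \<le> measure M (A.Hit 0)"
    by (simp add: A.emeasure_eq_measure)
  then show ?thesis by (simp only: A.Hit_0_eq_Max B.Hit_0_eq_Max)
qed

end
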